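(* Let $p\in\mathbb{T}^{\mathcal{P}([n])}$ be a tropical Wick vector. If $x\in\mathbb{T}^{\mathcal{J}}$ lies in the cocycle space $\mathcal{Q}(p)$, then $x$ lies in the tropical convex hull of the cocircuits of $p$.
   Context: $\mathbb{T}=\mathbb{R}\cup\{\infty\}$ with $\oplus=\min$, $\odot=+$; $\mathcal{P}([n])$ the set of subsets of $[n]$. A tropical Wick vector is $p$ such that for all $S,T\subseteq[n]$ the minimum $\min_{i\in S\Delta T}(p_{S\Delta\{i\}}+p_{T\Delta\{i\}})$ is attained at least twice or equals $\infty$. Let $\mathcal{J}=\{1,\dots,n,1^*,\dots,n^*\}$ with involution $i\leftrightarrow i^*$; $X\subseteq\mathcal{J}$ is admissible if $X\cap X^*=\emptyset$. For $S\subseteq[n]$ let $\bar S=S\cup\{i^*:i\in[n]\setminus S\}$ and $\bar p_{\bar S}:=p_S$. For $T\subseteq[n]$: $(c_T)_i=\bar p_{\bar T\Delta\{i,i^*\}}$ if $i\in\bar T$, $\infty$ otherwise; $(c^*_T)_i=\bar p_{\bar T\Delta\{i,i^*\}}$ if $i\notin\bar T$, $\infty$ otherwise. Circuits of $p$: $c_T+\lambda\mathbf{1}$ ($\lambda\in\mathbb{R}$) with nonempty support; cocircuits: $c^*_T+\lambda\mathbf{1}$ with nonempty support (support = coordinates $\neq\infty$). $x,y$ are tropically orthogonal if $\min_k(x_k+y_k)$ is attained at least twice or equals $\infty$. The cocycle space $\mathcal{Q}(p)$ is the set of vectors in $\mathbb{T}^{\mathcal{J}}$ with admissible support that are tropically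 orthogonal to all circuits of $p$. The tropical convex hull of a set $A$ is the set of all finite tropical linear combinations $\lambda_1\odot a_1\oplus\cdots\oplus\lambda_r\odot a_r$ with $a_k\in A$, $\lambda_k\in\mathbb{T}$. *)

theory Defs
  imports "HOL-Library.Extended_Real"
begin

text \<open>Tropical semiring T = R \<union> {\<infinity>} is modelled inside ereal (values must avoid MInfty);
  tropical addition is min, tropical multiplication is +.  The index set J = {1..n, 1*..n*} is modelled in type nat + nat:
  Inl i stands for i and Inr i stands for i*.\<close>

type_synonym idx = "nat + nat"

definition Jset :: "nat \<Rightarrow> idx set" where
  "Jset n = Inl ` {1..n} \<union> Inr ` {1..n}"

fun star :: "idx \<Rightarrow> idx" where
  "star (Inl i) = Inr i"
| "star (Inr i) = Inl i"

definition admissible :: "idx set \<Rightarrow> bool" where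
  "admissible X \<longleftrightarrow> X \<inter> star ` X = {}"

definition sdiff :: "'a set \<Rightarrow> 'a set \<Rightarrow> 'a set" where
  "sdiff A B = (A - B) \<union> (B - A)"

definition min_twice :: "'a set \<Rightarrow> ('a \<Rightarrow> ereal) \<Rightarrow> bool" where
  "min_twice I f \<longleftrightarrow> (\<forall>i\<in>I. f i = PInfty) \<or>
     (\<exists>i\<in>I. \<exists>j\<in>I. i \<noteq> j \<and> f i = f j \<and> (\<forall>k\<in>I. f i \<le> f k))"

definition trop_wick :: "nat \<Rightarrow> (nat set \<Rightarrow> ereal) \<Rightarrow> bool" where
  "trop_wick n p \<longleftrightarrow> (\<forall>S. S \<subseteq> {1..n} \<longrightarrow> p S \<noteq> MInfty) \<and>
     (\<forall>S T. S \<subseteq> {1..n} \<longrightarrow> T \<subseteq> {1..n} \<longrightarrow>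
        min_twice (sdiff S T) (\<lambda>i. p (sdiff S {i}) + p (sdiff T {i})))"

definition bar :: "nat \<Rightarrow> nat set \<Rightarrow> idx set" where
  "bar n S = Inl ` S \<union> Inr ` ({1..n} - S)"

text \<open>pbar p (bar n S) = p S\<close>
definition pbar :: "(nat set \<Rightarrow> ereal) \<Rightarrow> idx set \<Rightarrow> ereal" where
  "pbar p X = p {i. Inl i \<in> X}"

definition circ :: "nat \<Rightarrow> (nat set \<Rightarrow> ereal) \<Rightarrow> nat set \<Rightarrow> idx \<Rightarrow> ereal" where
  "circ n p T i = (if i \<in> bar n T then pbar p (sdiff (bar n T) {i, star i}) else PInfty)"

definition cocirc :: "nat \<Rightarrow> (nat set \<Rightarrow> ereal) \<Rightarrow> nat set \<Rightarrow> idx \<Rightarrow> ereal" where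
  "cocirc n p T i = (if i \<notin> bar n T then pbar p (sdiff (bar n T) {i, star i}) else PInfty)"

definition supp :: "nat \<Rightarrow> (idx \<Rightarrow> ereal) \<Rightarrow> idx set" where
  "supp n x = {k \<in> Jset n. x k \<noteq> PInfty}"

definition circuits :: "nat \<Rightarrow> (nat set \<Rightarrow> ereal) \<Rightarrow> (idx \<Rightarrow> ereal) set" where
  "circuits n p = {y. \<exists>T (l::real). T \<subseteq> {1..n} \<and> y = (\<lambda>k. circ n p T k + ereal l)
                        \<and> supp n y \<noteq> {}}"

definition cocircuits :: "nat \<Rightarrow> (nat set \<Rightarrow> ereal) \<Rightarrow> (idx \<Rightarrow> ereal) set" where
  "cocircuits n p = {y. \<exists>T (l::real). T \<subseteq> {1..n} \<and> y = (\<lambda>k. cocirc n p T k + ereal l)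
                        \<and> supp n y \<noteq> {}}"

definition trop_orth :: "nat \<Rightarrow> (idx \<Rightarrow> ereal) \<Rightarrow> (idx \<Rightarrow> ereal) \<Rightarrow> bool" where
  "trop_orth n x y \<longleftrightarrow> min_twice (Jset n) (\<lambda>k. x k + y k)"

text \<open>Vectors in T^J: coordinates on J avoid MInfty (coordinates outside J are irrelevant).\<close>
definition trop_vec :: "nat \<Rightarrow> (idx \<Rightarrow> ereal) \<Rightarrow> bool" where
  "trop_vec n x \<longleftrightarrow> (\<forall>k\<in>Jset n. x k \<noteq> MInfty)"

definition cocycle_space :: "nat \<Rightarrow> (nat set \<Rightarrow> ereal) \<Rightarrow> (idx \<Rightarrow> ereal) set" where
  "cocycle_space n p = {x. trop_vec n x \<and> admissible (supp n x) \<and>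
                           (\<forall>c\<in>circuits n p. trop_orth n x c)}"

definition trop_hull :: "nat \<Rightarrow> (idx \<Rightarrow> ereal) set \<Rightarrow> (idx \<Rightarrow> ereal) set" where
  "trop_hull n A = {x. \<exists>cs :: (ereal \<times> (idx \<Rightarrow> ereal)) list.
      (\<forall>(l, a) \<in> set cs. l \<noteq> MInfty \<and> a \<in> A) \<and>
      (\<forall>k\<in>Jset n. x k = foldr min (map (\<lambda>(l, a). l + a k) cs) PInfty)}"

end

theory Submission
  imports Defs "HOL-Library.Product_Lexorder"
begin

text \<open>Write \<open>X\<close> for the support of \<open>x\<close> and call \<open>T \<subseteq> [n]\<close> a basis if \<open>p T\<close> is finite.
  Choose a basis minimising, lexicographically, the number of elements of \<open>X\<close> in \<open>bar n T\<close> and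
  then \<open>p T\<close> minus the sum of \<open>x\<close> over these elements. If \<open>k \<in> X\<close> is not in \<open>bar n T\<close>,
  orthogonality of \<open>x\<close> to the circuit of \<open>T \<Delta> {k}\<close> through \<open>k\<close> provides a single exchange that
  stays optimal and brings \<open>k\<close> into the bar. If \<open>k \<in> X\<close> lies in \<open>bar n T\<close> for an optimal \<open>T\<close>,
  comparing \<open>T\<close> with its single exchanges shows that the cocircuit of \<open>T \<Delta> {k}\<close>, shifted to
  agree with \<open>x\<close> at \<open>k\<close>, lies above \<open>x\<close>. Hence \<open>x\<close> is the minimum of these cocircuits over
  \<open>k \<in> X\<close>.\<close>

lemma foldr_min_map_le:
  fixes f :: "'a \<Rightarrow> 'b::linorder"
  shows "c \<in> set cs \<Longrightarrow> foldr min (map f cs) z \<le> f c"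
  by (induction cs) (auto simp: min.coboundedI2)

lemma le_foldr_min_map:
  fixes f :: "'a \<Rightarrow> 'b::linorder"
  shows "(\<forall>c\<in>set cs. y \<le> f c) \<Longrightarrow> y \<le> z \<Longrightarrow> y \<le> foldr min (map f cs) z"
  by (induction cs) auto

lemma min_twice_obtain_other:
  assumes "min_twice I f" "k \<in> I" "f k \<noteq> PInfty"
  obtains j where "j \<in> I" "j \<noteq> k" "f j \<le> f k"
  using assms unfolding min_twice_def by (metis order.refl)

lemma card_insert_Diff_swap:
  "finite A \<Longrightarrow> a \<in> A \<Longrightarrow> b \<notin> A \<Longrightarrow> card (insert b (A - {a})) = card A"
  by (metis DiffE card_Suc_Diff1 card_insert_disjoint finite_Diff)

lemma sum_insert_Diff_swap:
  fixes g :: "'a \<Rightarrow> 'b::ab_group_add"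
  shows "finite A \<Longrightarrow> a \<in> A \<Longrightarrow> b \<notin> A \<Longrightarrow> sum g (insert b (A - {a})) = sum g A - g a + g b"
  by (simp add: sum_diff1 add.commute)

lemma sdiff_swap_Int:
  assumes "a \<in> A" "b \<notin> A" "b \<in> X" "a' \<notin> X" "b' \<notin> X"
  shows "sdiff (sdiff A {a, a'}) {b, b'} \<inter> X = insert b (A \<inter> X - {a})"
    and "sdiff (sdiff A {b, b'}) {a, a'} \<inter> X = insert b (A \<inter> X - {a})"
  using assms by (auto simp: sdiff_def)

lemma sdiff_sdiff_Int_psubset:
  assumes "a \<in> A" "a \<in> X" "b \<notin> X" "a' \<notin> X" "b' \<in> A" "b' \<noteq> a" "b' \<noteq> a'"
  shows "sdiff (sdiff A {a, a'}) {b, b'} \<inter> X \<subset> A \<inter> X"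
  using assms by (auto simp: sdiff_def)

lemma in_trop_hull_if_tight_upper_bounds:
  assumes "\<And>k. k \<in> supp n x \<Longrightarrow> \<exists>a\<in>A. (\<forall>j\<in>Jset n. x j \<le> a j) \<and> a k = x k"
  shows "x \<in> trop_hull n A"
proof -
  obtain b where b: "\<And>k. k \<in> supp n x \<Longrightarrow> b k \<in> A \<and> (\<forall>j\<in>Jset n. x j \<le> b k j) \<and> b k k = x k"
    using assms by metis
  have "finite (supp n x)"
    by (rule finite_subset[of _ "Jset n"]) (auto simp: supp_def Jset_def)
  then obtain ks where ks: "set ks = supp n x" using finite_list by blast
  define cs where "cs = map (\<lambda>k. (0::ereal, b k)) ks"
  have "x j = foldr min (map (\<lambda>(l, a). l + a j) cs) PInfty" if j: "j \<in> Jset n" for j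
  proof (rule antisym)
    show "x j \<le> foldr min (map (\<lambda>(l, a). l + a j) cs) PInfty"
      by (rule le_foldr_min_map) (use b ks j in \<open>auto simp: cs_def\<close>)
    show "foldr min (map (\<lambda>(l, a). l + a j) cs) PInfty \<le> x j"
    proof (cases "j \<in> supp n x")
      case True
      then have "(0, b j) \<in> set cs" using ks by (auto simp: cs_def)
      from foldr_min_map_le[OF this, of "\<lambda>(l, a). l + a j"] show ?thesis using b[OF True] by simp
    next
      case False
      then show ?thesis using j by (simp add: supp_def)
    qed
  qed
  moreover have "\<forall>(l, a) \<in> set cs. l \<noteq> MInfty \<and> a \<in> A"
    using b ks by (auto simp: cs_def)
  ultimately show ?thesis unfolding trop_hull_def by blast
qed

fun coord :: "idx \<Rightarrow> nat" where
  "coord (Inl i) = i"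
| "coord (Inr i) = i"

definition toggle :: "nat set \<Rightarrow> idx \<Rightarrow> nat set" where
  "toggle T k = sdiff T {coord k}"

lemma star_star [simp]: "star (star v) = v"
  by (cases v) auto

lemma star_neq [simp]: "star v \<noteq> v" "v \<noteq> star v"
  by (cases v; simp)+

lemma star_inj [simp]: "star u = star v \<longleftrightarrow> u = v"
  by (metis star_star)

lemma toggle_toggle [simp]: "toggle (toggle T k) k = T"
  by (auto simp: toggle_def sdiff_def)

lemma toggle_subset: "T \<subseteq> {1..n} \<Longrightarrow> k \<in> Jset n \<Longrightarrow> toggle T k \<subseteq> {1..n}"
  by (auto simp: toggle_def sdiff_def Jset_def)

lemma star_in_bar_iff: "k \<in> Jset n \<Longrightarrow> star k \<in> bar n T \<longleftrightarrow> k \<notin> bar n T"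
  by (auto simp: Jset_def bar_def)

lemma bar_toggle: "k \<in> Jset n \<Longrightarrow> bar n (toggle T k) = sdiff (bar n T) {k, star k}"
  by (auto simp: Jset_def bar_def toggle_def sdiff_def)

lemma pbar_sdiff_bar: "pbar p (sdiff (bar n T) {k, star k}) = p (toggle T k)"
proof -
  have "{i. Inl i \<in> sdiff (bar n T) {k, star k}} = toggle T k"
    by (cases k) (auto simp: bar_def sdiff_def toggle_def)
  then show ?thesis by (simp add: pbar_def)
qed

lemma circ_eq: "circ n p T k = (if k \<in> bar n T then p (toggle T k) else PInfty)"
  by (simp add: circ_def pbar_sdiff_bar)

lemma cocirc_eq: "cocirc n p T k = (if k \<in> bar n T then PInfty else p (toggle T k))"
  by (simp add: cocirc_def pbar_sdiff_bar)

locale cocycle_vector =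
  fixes n :: nat and p :: "nat set \<Rightarrow> ereal" and x :: "idx \<Rightarrow> ereal"
  assumes p_not_MInfty: "S \<subseteq> {1..n} \<Longrightarrow> p S \<noteq> MInfty"
    and basis_exists: "\<exists>S \<subseteq> {1..n}. p S \<noteq> PInfty"
    and in_cocycle_space: "x \<in> cocycle_space n p"
begin

definition bases :: "nat set set" where
  "bases = {T. T \<subseteq> {1..n} \<and> p T \<noteq> PInfty}"

definition marked :: "nat set \<Rightarrow> idx set" where
  "marked T = bar n T \<inter> supp n x"

text \<open>Weights are compared lexicographically (\<open>Product_Lexorder\<close>).\<close>

definition weight :: "nat set \<Rightarrow> nat \<times> real" where
  "weight T = (card (marked T), real_of_ereal (p T) - (\<Sum>v\<in>marked T. real_of_ereal (x v)))"

definition optimal :: "nat set \<Rightarrow> bool" where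
  "optimal T \<longleftrightarrow> T \<in> bases \<and> (\<forall>T'\<in>bases. weight T \<le> weight T')"

lemma p_basis_real: "T \<in> bases \<Longrightarrow> p T = ereal (real_of_ereal (p T))"
  using p_not_MInfty[of T] by (cases "p T") (auto simp: bases_def)

lemma x_supp_real: "v \<in> supp n x \<Longrightarrow> x v = ereal (real_of_ereal (x v))"
  using in_cocycle_space by (cases "x v") (auto simp: supp_def cocycle_space_def trop_vec_def)

lemma supp_subset_J: "supp n x \<subseteq> Jset n"
  by (auto simp: supp_def)

lemma star_notin_supp:
  assumes "v \<in> supp n x" shows "star v \<notin> supp n x"
proof
  assume "star v \<in> supp n x"
  then have "v \<in> star ` supp n x" by (rule rev_image_eqI) simp
  with assms in_cocycle_space show False by (auto simp: cocycle_space_def admissible_def)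
qed

lemma finite_marked: "finite (marked T)"
  by (rule finite_subset[of _ "Jset n"]) (auto simp: marked_def supp_def Jset_def)

lemma optimal_exists: "\<exists>T. optimal T"
proof -
  have "finite bases" by (rule finite_subset[of _ "Pow {1..n}"]) (auto simp: bases_def)
  moreover have "bases \<noteq> {}" using basis_exists by (auto simp: bases_def)
  ultimately obtain T where "is_arg_min weight (\<lambda>T. T \<in> bases) T"
    using ex_is_arg_min_if_finite by blast
  then show ?thesis by (auto simp: optimal_def is_arg_min_def not_less)
qed

lemma optimal_if_weight_le: "optimal T \<Longrightarrow> T' \<in> bases \<Longrightarrow> weight T' \<le> weight T \<Longrightarrow> optimal T'"
  unfolding optimal_def using order_trans by blast

lemma weight_less_if_marked_psubset: "marked T' \<subset> marked T \<Longrightarrow> weight T' < weight T"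
  by (simp add: weight_def psubset_card_mono finite_marked)

lemma weight_swap_le_iff:
  assumes "T \<in> bases" "T' \<in> bases" "a \<in> marked T" "b \<in> supp n x" "b \<notin> marked T"
    and "marked T' = insert b (marked T - {a})"
  shows "weight T' \<le> weight T \<longleftrightarrow> x a + p T' \<le> x b + p T"
    and "weight T \<le> weight T' \<longleftrightarrow> x b + p T \<le> x a + p T'"
proof -
  note swap = card_insert_Diff_swap[OF finite_marked assms(3,5)]
    sum_insert_Diff_swap[OF finite_marked assms(3,5), of "\<lambda>v. real_of_ereal (x v)"]
  have "a \<in> supp n x" using assms(3) by (simp add: marked_def)
  then obtain \<alpha> \<beta> \<pi> \<pi>' where
    "x a = ereal \<alpha>" "x b = ereal \<beta>" "p T = ereal \<pi>" "p T' = ereal \<pi>'"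
    using assms(1,2,4) p_basis_real x_supp_real by metis
  with swap assms(6) show "weight T' \<le> weight T \<longleftrightarrow> x a + p T' \<le> x b + p T"
    and "weight T \<le> weight T' \<longleftrightarrow> x b + p T \<le> x a + p T'"
    by (auto simp: weight_def)
qed

lemma circuit_exchange:
  assumes T: "T \<in> bases" and k: "k \<in> supp n x" "k \<notin> bar n T"
  obtains j where "j \<in> marked T" "x j + p (toggle (toggle T k) j) \<le> x k + p T"
proof -
  have kJ: "k \<in> Jset n" using k supp_subset_J by blast
  define U where "U = toggle T k"
  have barU: "bar n U = sdiff (bar n T) {k, star k}" using kJ by (simp add: U_def bar_toggle)
  have "star k \<in> bar n T" using kJ k by (simp add: star_in_bar_iff)
  then have "k \<in> bar n U" using barU k(2) by (simp add: sdiff_def)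
  define c where "c = (\<lambda>j. circ n p U j + ereal 0)"
  have ck: "c k = p T" using \<open>k \<in> bar n U\<close> by (simp add: c_def circ_eq U_def)
  have "c \<in> circuits n p"
    unfolding circuits_def
  proof (intro CollectI exI conjI)
    show "U \<subseteq> {1..n}" using toggle_subset[of T n k] T kJ by (simp add: bases_def U_def)
    show "c = (\<lambda>j. circ n p U j + ereal 0)" by (simp add: c_def)
    show "supp n c \<noteq> {}" using kJ ck T by (auto simp: supp_def bases_def)
  qed
  then have "min_twice (Jset n) (\<lambda>j. x j + c j)"
    using in_cocycle_space by (simp add: cocycle_space_def trop_orth_def)
  moreover have "x k + c k \<noteq> PInfty"
    using ck x_supp_real[OF k(1)] p_basis_real[OF T] by (metis plus_ereal.simps(1) ereal.distinct(1))
  ultimately obtain j where j: "j \<in> Jset n" "j \<noteq> k" and le: "x j + c j \<le> x k + c k"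
    by (rule min_twice_obtain_other[OF _ kJ])
  then have "x j \<noteq> PInfty" "c j \<noteq> PInfty" using \<open>x k + c k \<noteq> PInfty\<close> by auto
  then have jX: "j \<in> supp n x" and jU: "j \<in> bar n U"
    using j by (auto simp: supp_def c_def circ_eq split: if_splits)
  have "j \<in> bar n T" using jU barU j(2) star_notin_supp[OF k(1)] jX by (auto simp: sdiff_def)
  moreover have "c j = p (toggle (toggle T k) j)" using jU by (simp add: c_def circ_eq U_def)
  ultimately show thesis using that[of j] jX le ck by (simp add: marked_def)
qed

lemma optimal_exchange:
  assumes opt: "optimal T" and k: "k \<in> supp n x" "k \<notin> bar n T"
  shows "\<exists>T'. optimal T' \<and> k \<in> bar n T'"
proof -
  have kJ: "k \<in> Jset n" using k supp_subset_J by blast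
  have T: "T \<in> bases" using opt by (simp add: optimal_def)
  obtain j where jM: "j \<in> marked T" and le: "x j + p (toggle (toggle T k) j) \<le> x k + p T"
    using circuit_exchange[OF T k] .
  define T' where "T' = toggle (toggle T k) j"
  have jX: "j \<in> supp n x" and jT: "j \<in> bar n T" using jM by (simp_all add: marked_def)
  have jJ: "j \<in> Jset n" using jX supp_subset_J by blast
  obtain \<alpha> \<beta> r where "x k = ereal \<alpha>" "x j = ereal \<beta>" "p T = ereal r"
    using x_supp_real[OF k(1)] x_supp_real[OF jX] p_basis_real[OF T] by metis
  with le have "p T' \<noteq> PInfty" by (auto simp: T'_def)
  then have T'_basis: "T' \<in> bases"
    using T kJ jJ toggle_subset[of T n k] toggle_subset[of "toggle T k" n j]
    by (simp add: bases_def T'_def)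
  have barT': "bar n T' = sdiff (sdiff (bar n T) {k, star k}) {j, star j}"
    using kJ jJ by (simp add: T'_def bar_toggle)
  have "marked T' = insert k (marked T - {j})"
    unfolding marked_def barT'
    by (rule sdiff_swap_Int(2)[OF jT k(2,1) star_notin_supp[OF jX] star_notin_supp[OF k(1)]])
  moreover have "k \<notin> marked T" using k(2) by (simp add: marked_def)
  ultimately have "weight T' \<le> weight T"
    using weight_swap_le_iff(1)[OF T T'_basis jM k(1)] le by (simp add: T'_def)
  moreover have "k \<in> bar n T'"
    using barT' k jT star_notin_supp[OF jX] by (auto simp: sdiff_def)
  ultimately show ?thesis using optimal_if_weight_le[OF opt T'_basis] by blast
qed

lemma optimal_exchange_le:
  assumes opt: "optimal T" and k: "k \<in> supp n x" "k \<in> bar n T"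
    and j: "j \<in> Jset n" "j \<notin> bar n T" "j \<noteq> star k"
  shows "x j + p T \<le> x k + p (toggle (toggle T k) j)"
proof (cases "p (toggle (toggle T k) j) = PInfty")
  case True
  obtain \<alpha> where "x k = ereal \<alpha>" using x_supp_real[OF k(1)] by metis
  with True show ?thesis by simp
next
  case False
  define T' where "T' = toggle (toggle T k) j"
  have kJ: "k \<in> Jset n" using k supp_subset_J by blast
  have T: "T \<in> bases" using opt by (simp add: optimal_def)
  have T'_basis: "T' \<in> bases"
    using False T kJ j(1) toggle_subset[of T n k] toggle_subset[of "toggle T k" n j]
    by (simp add: bases_def T'_def)
  have barT': "bar n T' = sdiff (sdiff (bar n T) {k, star k}) {j, star j}"
    using kJ j(1) by (simp add: T'_def bar_toggle)
  have jX: "j \<in> supp n x"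
  proof (rule ccontr)
    assume jX': "j \<notin> supp n x"
    have "star j \<in> bar n T" using j(1,2) by (simp add: star_in_bar_iff)
    moreover have "star j \<noteq> k" "star j \<noteq> star k" using j(2,3) k(2) by auto
    ultimately have "marked T' \<subset> marked T"
      unfolding marked_def barT'
      by (rule sdiff_sdiff_Int_psubset[OF k(2,1) jX' star_notin_supp[OF k(1)]])
    then have "weight T' < weight T" by (rule weight_less_if_marked_psubset)
    moreover have "weight T \<le> weight T'" using opt T'_basis by (simp add: optimal_def)
    ultimately show False by simp
  qed
  have "marked T' = insert j (marked T - {k})"
    unfolding marked_def barT'
    by (rule sdiff_swap_Int(1)[OF k(2) j(2) jX star_notin_supp[OF k(1)] star_notin_supp[OF jX]])
  moreover have "k \<in> marked T" "j \<notin> marked T" using k j(2) by (simp_all add: marked_def)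
  ultimately have "weight T \<le> weight T' \<longleftrightarrow> x j + p T \<le> x k + p T'"
    by (intro weight_swap_le_iff(2)[OF T T'_basis _ jX])
  moreover have "weight T \<le> weight T'" using opt T'_basis by (simp add: optimal_def)
  ultimately have "x j + p T \<le> x k + p T'" by blast
  then show ?thesis by (simp add: T'_def)
qed

lemma optimal_tight_cocircuit:
  assumes opt: "optimal T" and k: "k \<in> supp n x" "k \<in> bar n T"
  shows "\<exists>G\<in>cocircuits n p. (\<forall>j\<in>Jset n. x j \<le> G j) \<and> G k = x k"
proof -
  have kJ: "k \<in> Jset n" using k supp_subset_J by blast
  have T: "T \<in> bases" using opt by (simp add: optimal_def)
  obtain \<alpha> r where xk: "x k = ereal \<alpha>" and pT: "p T = ereal r"
    using x_supp_real[OF k(1)] p_basis_real[OF T] by metis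
  define T' where "T' = toggle T k"
  define G where "G = (\<lambda>j. cocirc n p T' j + ereal (\<alpha> - r))"
  have barT': "bar n T' = sdiff (bar n T) {k, star k}" using kJ by (simp add: T'_def bar_toggle)
  have "k \<notin> bar n T'" using barT' k(2) by (simp add: sdiff_def)
  then have Gk: "G k = x k" using xk pT by (simp add: G_def cocirc_eq T'_def)
  have "x j \<le> G j" if j: "j \<in> Jset n" for j
  proof (cases "j \<in> bar n T' \<or> j = k")
    case True
    then show ?thesis using Gk by (auto simp: G_def cocirc_eq)
  next
    case False
    have "star k \<in> bar n T'" using barT' k(2) kJ by (simp add: sdiff_def star_in_bar_iff)
    then have "j \<notin> bar n T" "j \<noteq> star k" using False barT' by (auto simp: sdiff_def)
    from optimal_exchange_le[OF opt k j this]
    have "x j + ereal r \<le> ereal \<alpha> + p (toggle T' j)" using xk pT by (simp add: T'_def)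
    moreover have "G j = p (toggle T' j) + ereal (\<alpha> - r)" using False by (simp add: G_def cocirc_eq)
    ultimately show ?thesis
      by (cases "x j"; cases "p (toggle T' j)") auto
  qed
  moreover have "G \<in> cocircuits n p"
    unfolding cocircuits_def
  proof (intro CollectI exI conjI)
    show "T' \<subseteq> {1..n}" using toggle_subset[of T n k] T kJ by (simp add: bases_def T'_def)
    show "G = (\<lambda>j. cocirc n p T' j + ereal (\<alpha> - r))" by (simp add: G_def)
    show "supp n G \<noteq> {}" using kJ Gk xk by (auto simp: supp_def)
  qed
  ultimately show ?thesis using Gk by blast
qed

theorem in_trop_hull_cocircuits: "x \<in> trop_hull n (cocircuits n p)"
proof (rule in_trop_hull_if_tight_upper_bounds)
  fix k assume k: "k \<in> supp n x"
  obtain T0 where "optimal T0" using optimal_exists by blast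
  then obtain T where "optimal T" "k \<in> bar n T"
    using optimal_exchange[OF _ k] by (cases "k \<in> bar n T0") blast+
  then show "\<exists>G\<in>cocircuits n p. (\<forall>j\<in>Jset n. x j \<le> G j) \<and> G k = x k"
    using optimal_tight_cocircuit k by blast
qed

end

theorem lemma6p8:
  fixes n :: nat and p :: "nat set \<Rightarrow> ereal" and x :: "idx \<Rightarrow> ereal"
  assumes "trop_wick n p"
    and "\<exists>S \<subseteq> {1..n}. p S \<noteq> PInfty"
    and "x \<in> cocycle_space n p"
  shows "x \<in> trop_hull n (cocircuits n p)"
proof -
  interpret cocycle_vector n p x
    using assms by unfold_locales (auto simp: trop_wick_def)
  show ?thesis by (rule in_trop_hull_cocircuits)
qed

end
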